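(* Let $A,B,C$ be distinct letters in an $\alpha$-alphabet $\mathcal A$ and let $x,y,z,t$ be words in the alphabet $\mathcal A\setminus\{A,B,C\}$ such that $xyzt$ is a Gauss word in this alphabet. Then (i) $(\mathcal A,xAByCAzBCt)\simeq_S(\mathcal A,xBAyACzCBt)$ if $(|A|,\tau(|B|),|C|)\in S$; (ii) $(\mathcal A,xAByCAzCBt)\simeq_S(\mathcal A,xBAyACzBCt)$ if $(\tau(|A|),\tau(|B|),|C|)\in S$; (iii) $(\mathcal A,xAByACzCBt)\simeq_S(\mathcal A,xBAyCAzBCt)$ if $(|A|,\tau(|B|),\tau(|C|))\in S$.
   Context: Fix a set $\alpha$ with an involution $\tau$ and an arbitrary subset $S\subset\alpha\times\alpha\times\alpha$. An $\alpha$-alphabet is a set $\mathcal A$ with a map $A\mapsto|A|\in\alpha$. A Gauss word in a finite alphabet is a word in which each letter of the alphabet occurs exactly twice. A nanoword over $\alpha$ is a pair $(\mathcal A,w)$ with $\mathcal A$ a finite $\alpha$-alphabet and $w$ a Gauss word in $\mathcal A$. Nanowords are isomorphic if a bijection of alphabets preserving $|\cdot|$ carries one word letterwise to the other. $S$-homotopy moves ($x,y,z,t$ words in the remaining letters; smaller alphabets carry the restricted projection): (1) $(\mathcal A,xAAy)\mapsto(\mathcal A\setminus\{A\},xy)$; (2) $(\mathcal A,xAByBAz)\mapsto(\mathcal A\setminus\{A,B\},xyz)$ if $|B|=\tau(|A|)$; (3) $(\mathcal A,xAByACzBCt)\mapsto(\mathcal A,xBAyCAzCBt)$ if $A,B,C$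 are distinct and $(|A|,|B|,|C|)\in S$. $S$-homotopy $\simeq_S$ is the equivalence relation generated by isomorphisms, these moves and their inverses. *)

theory Defs
  imports Main
begin

text \<open>A nanoword over alpha (type 'a) with letters of type 'l is a triple
  (alphabet, projection, word): the alphabet is a finite set of letters, the
  projection gives each letter its value |.| in alpha (only its values on the
  alphabet matter), and the word is a Gauss word in the alphabet.\<close>

type_synonym ('l, 'a) nanoword = "'l set \<times> ('l \<Rightarrow> 'a) \<times> 'l list"

definition gauss_word :: "'l set \<Rightarrow> 'l list \<Rightarrow> bool" where
  "gauss_word Al w \<longleftrightarrow> set w \<subseteq> Al \<and> (\<forall>a\<in>Al. count_list w a = 2)"

definition is_nanoword :: "('l, 'a) nanoword \<Rightarrow> bool" where
  "is_nanoword n \<longleftrightarrow> (case n of (Al, p, w) \<Rightarrow> finite Al \<and> gauss_word Al w)"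

definition nano_iso :: "('l, 'a) nanoword \<Rightarrow> ('l, 'a) nanoword \<Rightarrow> bool" where
  "nano_iso n1 n2 \<longleftrightarrow> (case n1 of (Al1, p1, w1) \<Rightarrow> case n2 of (Al2, p2, w2) \<Rightarrow>
     is_nanoword n1 \<and> is_nanoword n2 \<and>
     (\<exists>f. bij_betw f Al1 Al2 \<and> (\<forall>a\<in>Al1. p2 (f a) = p1 a) \<and> map f w1 = w2))"

inductive nano_move :: "('a \<times> 'a \<times> 'a) set \<Rightarrow> ('a \<Rightarrow> 'a) \<Rightarrow>
    ('l, 'a) nanoword \<Rightarrow> ('l, 'a) nanoword \<Rightarrow> bool"
  for S :: "('a \<times> 'a \<times> 'a) set" and \<tau> :: "'a \<Rightarrow> 'a" where
  move1: "is_nanoword (Al, p, x @ [a, a] @ y) \<Longrightarrow>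
          nano_move S \<tau> (Al, p, x @ [a, a] @ y) (Al - {a}, p, x @ y)"
| move2: "is_nanoword (Al, p, x @ [a, b] @ y @ [b, a] @ z) \<Longrightarrow> p b = \<tau> (p a) \<Longrightarrow>
          nano_move S \<tau> (Al, p, x @ [a, b] @ y @ [b, a] @ z) (Al - {a, b}, p, x @ y @ z)"
| move3: "is_nanoword (Al, p, x @ [a, b] @ y @ [a, c] @ z @ [b, c] @ t) \<Longrightarrow>
          a \<noteq> b \<Longrightarrow> a \<noteq> c \<Longrightarrow> b \<noteq> c \<Longrightarrow> (p a, p b, p c) \<in> S \<Longrightarrow>
          nano_move S \<tau> (Al, p, x @ [a, b] @ y @ [a, c] @ z @ [b, c] @ t)
                         (Al, p, x @ [b, a] @ y @ [c, a] @ z @ [c, b] @ t)"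

definition nano_homotopic :: "('a \<times> 'a \<times> 'a) set \<Rightarrow> ('a \<Rightarrow> 'a) \<Rightarrow>
    ('l, 'a) nanoword \<Rightarrow> ('l, 'a) nanoword \<Rightarrow> bool" where
  "nano_homotopic S \<tau> = (\<lambda>u v. nano_iso u v \<or> nano_move S \<tau> u v \<or> nano_move S \<tau> v u)\<^sup>*\<^sup>*"

end

theory Submission
  imports Defs "HOL-Library.Multiset"
begin

text \<open>Each relation comes from one move performed in a longer word. An inverse second move
  inserts a cancelling pair of fresh letters; in the longer word the relevant three letters form
  the pattern of a third move (case (i)) or of case (i) itself (cases (ii) and (iii)). After that
  move one fresh letter cancels against an original letter by a second move, and the other fresh
  letter is renamed to that original letter.\<close>

lemma gauss_word_iff_mset:
  assumes "finite Al"
  shows "gauss_word Al w \<longleftrightarrow> mset w = mset_set Al + mset_set Al"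
proof -
  have "gauss_word Al w \<longleftrightarrow> (\<forall>a. count_list w a = (if a \<in> Al then 2 else 0))"
    unfolding gauss_word_def by (auto simp: count_list_0_iff)
  also have "\<dots> \<longleftrightarrow> mset w = mset_set Al + mset_set Al"
    using assms by (auto simp: multiset_eq_iff count_mset count_mset_set')
  finally show ?thesis .
qed

lemma is_nanoword_iff_mset:
  "is_nanoword (Al, p, w) \<longleftrightarrow> finite Al \<and> mset w = mset_set Al + mset_set Al"
  unfolding is_nanoword_def by (auto simp: gauss_word_iff_mset)

lemma is_nanoword_perm:
  "is_nanoword (Al, p, w) \<Longrightarrow> mset w' = mset w \<Longrightarrow> is_nanoword (Al, p, w')"
  by (simp add: is_nanoword_iff_mset)

lemma nano_iso_sym: "nano_iso u v \<Longrightarrow> nano_iso v u"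
proof -
  assume iso: "nano_iso u v"
  obtain Al1 p1 w1 Al2 p2 w2 where uv: "u = (Al1, p1, w1)" "v = (Al2, p2, w2)"
    by (cases u, cases v) auto
  from iso obtain f where f: "bij_betw f Al1 Al2" "\<forall>a\<in>Al1. p2 (f a) = p1 a" "map f w1 = w2"
    and nw: "is_nanoword u" "is_nanoword v"
    unfolding nano_iso_def uv by auto
  let ?g = "inv_into Al1 f"
  have "set w1 \<subseteq> Al1"
    using nw(1) unfolding uv is_nanoword_def gauss_word_def by simp
  then have "map ?g w2 = w1"
    using f(1,3) by (auto simp: bij_betw_def inv_into_f_f subsetD intro!: map_idI)
  moreover have "\<forall>a\<in>Al2. p1 (?g a) = p2 a"
    using f(1,2) by (metis bij_betw_imp_surj_on bij_betw_inv_into bij_betwE f_inv_into_f)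
  ultimately show ?thesis
    using nw bij_betw_inv_into[OF f(1)] unfolding nano_iso_def uv by auto
qed

lemma nano_homotopic_sym: "nano_homotopic S \<tau> u v \<Longrightarrow> nano_homotopic S \<tau> v u"
proof -
  have "symp (\<lambda>u v. nano_iso u v \<or> nano_move S \<tau> u v \<or> nano_move S \<tau> v u)"
    by (auto intro: sympI nano_iso_sym)
  then show "nano_homotopic S \<tau> u v \<Longrightarrow> nano_homotopic S \<tau> v u"
    unfolding nano_homotopic_def by (rule sympD[OF symp_rtranclp])
qed

lemma nano_homotopic_trans [trans]:
  "nano_homotopic S \<tau> u v \<Longrightarrow> nano_homotopic S \<tau> v w \<Longrightarrow> nano_homotopic S \<tau> u w"
  unfolding nano_homotopic_def by (rule rtranclp_trans)

lemma nano_homotopic_if_iso: "nano_iso u v \<Longrightarrow> nano_homotopic S \<tau> u v"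
  unfolding nano_homotopic_def by auto

lemma nano_homotopic_if_move: "nano_move S \<tau> u v \<Longrightarrow> nano_homotopic S \<tau> u v"
  unfolding nano_homotopic_def by auto

lemma nano_homotopic_if_move_rev: "nano_move S \<tau> v u \<Longrightarrow> nano_homotopic S \<tau> u v"
  unfolding nano_homotopic_def by auto

lemma nano_homotopic_insert_pair:
  assumes nw: "is_nanoword (Al, p, x @ y @ z)" and new: "d \<notin> Al" "e \<notin> Al" "d \<noteq> e"
  shows "nano_homotopic S \<tau> (Al, p, x @ y @ z)
           (insert d (insert e Al), p(d := u, e := \<tau> u), x @ [d, e] @ y @ [e, d] @ z)"
proof -
  let ?q = "p(d := u, e := \<tau> u)"
  have "nano_iso (Al, p, x @ y @ z) (Al, ?q, x @ y @ z)"
    using nw new unfolding nano_iso_def is_nanoword_def by (auto intro!: exI[of _ id])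
  then have "nano_homotopic S \<tau> (Al, p, x @ y @ z) (Al, ?q, x @ y @ z)"
    by (rule nano_homotopic_if_iso)
  also have "nano_homotopic S \<tau> \<dots> (insert d (insert e Al), ?q, x @ [d, e] @ y @ [e, d] @ z)"
  proof (rule nano_homotopic_if_move_rev)
    have "is_nanoword (insert d (insert e Al), ?q, x @ [d, e] @ y @ [e, d] @ z)"
      using nw new by (simp add: is_nanoword_iff_mset mset_set.insert)
    then have "nano_move S \<tau> (insert d (insert e Al), ?q, x @ [d, e] @ y @ [e, d] @ z)
                             (insert d (insert e Al) - {d, e}, ?q, x @ y @ z)"
      by (rule move2) (use new in simp)
    moreover have "insert d (insert e Al) - {d, e} = Al"
      using new by auto
    ultimately show "nano_move S \<tau> (insert d (insert e Al), ?q, x @ [d, e] @ y @ [e, d] @ z)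
                                   (Al, ?q, x @ y @ z)"
      by simp
  qed
  finally show ?thesis .
qed

lemma nano_homotopic_cancel_pair:
  assumes "is_nanoword (insert a (insert b Al), p, x @ [a, b] @ y @ [b, a] @ z)"
    and "a \<notin> Al" "b \<notin> Al" "p b = \<tau> (p a)"
  shows "nano_homotopic S \<tau> (insert a (insert b Al), p, x @ [a, b] @ y @ [b, a] @ z)
                             (Al, p, x @ y @ z)"
proof -
  have "nano_move S \<tau> (insert a (insert b Al), p, x @ [a, b] @ y @ [b, a] @ z)
                     (insert a (insert b Al) - {a, b}, p, x @ y @ z)"
    using assms by (intro move2)
  moreover have "insert a (insert b Al) - {a, b} = Al"
    using assms by auto
  ultimately show ?thesis
    by (simp add: nano_homotopic_if_move)
qed

lemma nano_homotopic_move3_rev: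
  assumes "is_nanoword (Al, p, x @ [b, a] @ y @ [c, a] @ z @ [c, b] @ t)"
    and "distinct [a, b, c]" "(p a, p b, p c) \<in> S"
  shows "nano_homotopic S \<tau> (Al, p, x @ [b, a] @ y @ [c, a] @ z @ [c, b] @ t)
                             (Al, p, x @ [a, b] @ y @ [a, c] @ z @ [b, c] @ t)"
proof -
  have "is_nanoword (Al, p, x @ [a, b] @ y @ [a, c] @ z @ [b, c] @ t)"
    by (rule is_nanoword_perm[OF assms(1)]) (simp add: add_mset_commute)
  then have "nano_move S \<tau> (Al, p, x @ [a, b] @ y @ [a, c] @ z @ [b, c] @ t)
                           (Al, p, x @ [b, a] @ y @ [c, a] @ z @ [c, b] @ t)"
    by (rule move3) (use assms(2,3) in auto)
  then show ?thesis
    by (rule nano_homotopic_if_move_rev)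
qed

lemma map_replace_notin [simp]: "d \<notin> set w \<Longrightarrow> map (\<lambda>u. if u = d then b else u) w = w"
  by (induction w) auto

lemma nano_homotopic_rename:
  assumes nw: "is_nanoword (insert d Al, q, w)" and new: "d \<notin> Al" "b \<notin> Al"
    and proj: "\<forall>u\<in>Al. p u = q u" "p b = q d"
  shows "nano_homotopic S \<tau> (insert d Al, q, w)
                             (insert b Al, p, map (\<lambda>u. if u = d then b else u) w)"
proof (rule nano_homotopic_if_iso)
  let ?f = "\<lambda>u. if u = d then b else u"
  have bij: "bij_betw ?f (insert d Al) (insert b Al)"
    using new unfolding bij_betw_def inj_on_def by auto
  have "mset (map ?f w) = image_mset ?f (mset_set (insert d Al) + mset_set (insert d Al))"
    using nw by (simp add: is_nanoword_iff_mset)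
  also have "\<dots> = mset_set (insert b Al) + mset_set (insert b Al)"
    using bij by (simp add: image_mset_mset_set bij_betw_def del: image_insert)
  finally have "is_nanoword (insert b Al, p, map ?f w)"
    using nw by (simp add: is_nanoword_iff_mset)
  then show "nano_iso (insert d Al, q, w) (insert b Al, p, map ?f w)"
    using nw bij proj new unfolding nano_iso_def by auto
qed

lemma ex_two_new_if_finite:
  assumes "infinite (UNIV :: 'a set)" "finite (A :: 'a set)"
  shows "\<exists>d e. d \<notin> A \<and> e \<notin> A \<and> d \<noteq> e"
  using ex_new_if_finite[OF assms(1) finite_insert[THEN iffD2, OF assms(2)]]
    ex_new_if_finite[OF assms] by blast

lemma nano_homotopic_move3_AB_CA_BC:
  fixes R :: "'l set"
  assumes inf: "infinite (UNIV :: 'l set)" and invol: "\<And>u. \<tau> (\<tau> u) = u"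
    and R: "finite R" "gauss_word R (x @ y @ z @ t)"
    and abc: "a \<notin> R" "b \<notin> R" "c \<notin> R" "distinct [a, b, c]"
    and S: "(p a, \<tau> (p b), p c) \<in> S"
  shows "nano_homotopic S \<tau> ({a, b, c} \<union> R, p, x @ [a, b] @ y @ [c, a] @ z @ [b, c] @ t)
                             ({a, b, c} \<union> R, p, x @ [b, a] @ y @ [a, c] @ z @ [c, b] @ t)"
proof -
  obtain d e where de: "d \<notin> {a, b, c} \<union> R" "e \<notin> {a, b, c} \<union> R" "d \<noteq> e"
    using ex_two_new_if_finite[OF inf, of "{a, b, c} \<union> R"] R(1) by auto
  \<comment> \<open>both orientations, so that the simplifier decides every equation between the letters\<close>
  then have dist: "distinct [a, b, c, d, e]" "distinct [e, d, c, b, a]"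
    using abc(4) by auto
  have d_words: "d \<notin> set (x @ y @ z @ t)"
    using R(2) de by (auto simp: gauss_word_def)
  have mset_R: "mset x + (mset y + (mset z + mset t)) = mset_set R + mset_set R"
    using R by (simp add: gauss_word_iff_mset)
  note nanoword = is_nanoword_iff_mset mset_set.insert add_mset_commute insert_commute mset_R R(1)
  define q where "q = p(d := p b, e := \<tau> (p b))"
  have q: "q a = p a" "q b = p b" "q c = p c" "q d = p b" "q e = \<tau> (p b)" "\<forall>u\<in>R. p u = q u"
    using de dist by (auto simp: q_def)
  have "nano_homotopic S \<tau> ({a, b, c} \<union> R, p, x @ [a, b] @ y @ [c, a] @ z @ [b, c] @ t)
          (insert d (insert e ({a, b, c} \<union> R)), q, x @ [d, e, a, b] @ y @ [c, a] @ z @ [b, c, e, d] @ t)"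
    using nano_homotopic_insert_pair[of "{a, b, c} \<union> R" p x "[a, b] @ y @ [c, a] @ z @ [b, c]" t
        d e S \<tau> "p b"] de dist abc
    by (simp add: q_def nanoword)
  also have "nano_homotopic S \<tau> \<dots>
      (insert d (insert e ({a, b, c} \<union> R)), q, x @ [d, a, e, b] @ y @ [a, c] @ z @ [b, e, c, d] @ t)"
    using nano_homotopic_move3_rev[of "insert d (insert e ({a, b, c} \<union> R))" q "x @ [d]" e a
        "b # y" c "z @ [b]" "d # t" S \<tau>] de dist abc S
    by (simp add: q nanoword)
  also have "nano_homotopic S \<tau> \<dots> (insert d ({a, c} \<union> R), q, x @ [d, a] @ y @ [a, c] @ z @ [c, d] @ t)"
    using nano_homotopic_cancel_pair[of e b "insert d ({a, c} \<union> R)" q "x @ [d, a]" "y @ [a, c] @ z"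
        "c # d # t" \<tau> S] de dist abc
    by (simp add: q nanoword invol)
  also have "nano_homotopic S \<tau> \<dots> ({a, b, c} \<union> R, p, x @ [b, a] @ y @ [a, c] @ z @ [c, b] @ t)"
    using nano_homotopic_rename[of d "{a, c} \<union> R" q "x @ [d, a] @ y @ [a, c] @ z @ [c, d] @ t"
        b p S \<tau>] de dist abc d_words
    by (simp add: q nanoword)
  finally show ?thesis .
qed

lemma nano_homotopic_move3_AB_CA_CB:
  fixes R :: "'l set"
  assumes inf: "infinite (UNIV :: 'l set)" and invol: "\<And>u. \<tau> (\<tau> u) = u"
    and R: "finite R" "gauss_word R (x @ y @ z @ t)"
    and abc: "a \<notin> R" "b \<notin> R" "c \<notin> R" "distinct [a, b, c]"
    and S: "(\<tau> (p a), \<tau> (p b), p c) \<in> S"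
  shows "nano_homotopic S \<tau> ({a, b, c} \<union> R, p, x @ [a, b] @ y @ [c, a] @ z @ [c, b] @ t)
                             ({a, b, c} \<union> R, p, x @ [b, a] @ y @ [a, c] @ z @ [b, c] @ t)"
proof -
  obtain d e where de: "d \<notin> {a, b, c} \<union> R" "e \<notin> {a, b, c} \<union> R" "d \<noteq> e"
    using ex_two_new_if_finite[OF inf, of "{a, b, c} \<union> R"] R(1) by auto
  then have dist: "distinct [a, b, c, d, e]" "distinct [e, d, c, b, a]"
    using abc(4) by auto
  have e_words: "e \<notin> set (x @ y @ z @ t)"
    using R(2) de by (auto simp: gauss_word_def)
  have mset_R: "mset x + (mset y + (mset z + mset t)) = mset_set R + mset_set R"
    using R by (simp add: gauss_word_iff_mset)
  note nanoword = is_nanoword_iff_mset gauss_word_iff_mset mset_set.insert add_mset_commute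
    insert_commute mset_R R(1)
  define q where "q = p(d := \<tau> (p a), e := p a)"
  have q: "q a = p a" "q b = p b" "q c = p c" "q d = \<tau> (p a)" "q e = p a" "\<forall>u\<in>R. p u = q u"
    using de dist by (auto simp: q_def)
  have "nano_homotopic S \<tau> ({a, b, c} \<union> R, p, x @ [a, b] @ y @ [c, a] @ z @ [c, b] @ t)
          (insert d (insert e ({a, b, c} \<union> R)), q, x @ [a, b, d, e] @ y @ [e, d, c, a] @ z @ [c, b] @ t)"
    using nano_homotopic_insert_pair[of "{a, b, c} \<union> R" p "x @ [a, b]" y "[c, a] @ z @ [c, b] @ t"
        d e S \<tau> "\<tau> (p a)"] de dist abc
    by (simp add: q_def invol nanoword)
  also have "nano_homotopic S \<tau> \<dots>
      (insert d (insert e ({a, b, c} \<union> R)), q, x @ [a, d, b, e] @ y @ [e, c, d, a] @ z @ [b, c] @ t)"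
    by (rule nano_homotopic_sym)
      (use nano_homotopic_move3_AB_CA_BC[OF inf invol, of "{a, e} \<union> R" "x @ [a]" "e # y @ [e]"
          "a # z" t d b c q S] de dist abc S in \<open>simp add: q nanoword\<close>)
  also have "nano_homotopic S \<tau> \<dots> (insert e ({b, c} \<union> R), q, x @ [b, e] @ y @ [e, c] @ z @ [b, c] @ t)"
    using nano_homotopic_cancel_pair[of a d "insert e ({b, c} \<union> R)" q x "b # e # y @ [e, c]"
        "z @ [b, c] @ t" \<tau> S] de dist abc
    by (simp add: q nanoword)
  also have "nano_homotopic S \<tau> \<dots> ({a, b, c} \<union> R, p, x @ [b, a] @ y @ [a, c] @ z @ [b, c] @ t)"
    using nano_homotopic_rename[of e "{b, c} \<union> R" q "x @ [b, e] @ y @ [e, c] @ z @ [b, c] @ t"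
        a p S \<tau>] de dist abc e_words
    by (simp add: q nanoword)
  finally show ?thesis .
qed

lemma nano_homotopic_move3_AB_AC_CB:
  fixes R :: "'l set"
  assumes inf: "infinite (UNIV :: 'l set)" and invol: "\<And>u. \<tau> (\<tau> u) = u"
    and R: "finite R" "gauss_word R (x @ y @ z @ t)"
    and abc: "a \<notin> R" "b \<notin> R" "c \<notin> R" "distinct [a, b, c]"
    and S: "(p a, \<tau> (p b), \<tau> (p c)) \<in> S"
  shows "nano_homotopic S \<tau> ({a, b, c} \<union> R, p, x @ [a, b] @ y @ [a, c] @ z @ [c, b] @ t)
                             ({a, b, c} \<union> R, p, x @ [b, a] @ y @ [c, a] @ z @ [b, c] @ t)"
proof -
  obtain d e where de: "d \<notin> {a, b, c} \<union> R" "e \<notin> {a, b, c} \<union> R" "d \<noteq> e"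
    using ex_two_new_if_finite[OF inf, of "{a, b, c} \<union> R"] R(1) by auto
  then have dist: "distinct [a, b, c, d, e]" "distinct [e, d, c, b, a]"
    using abc(4) by auto
  have d_words: "d \<notin> set (x @ y @ z @ t)"
    using R(2) de by (auto simp: gauss_word_def)
  have mset_R: "mset x + (mset y + (mset z + mset t)) = mset_set R + mset_set R"
    using R by (simp add: gauss_word_iff_mset)
  note nanoword = is_nanoword_iff_mset gauss_word_iff_mset mset_set.insert add_mset_commute
    insert_commute mset_R R(1)
  define q where "q = p(d := p c, e := \<tau> (p c))"
  have q: "q a = p a" "q b = p b" "q c = p c" "q d = p c" "q e = \<tau> (p c)" "\<forall>u\<in>R. p u = q u"
    using de dist by (auto simp: q_def)
  have "nano_homotopic S \<tau> ({a, b, c} \<union> R, p, x @ [a, b] @ y @ [a, c] @ z @ [c, b] @ t)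
          (insert d (insert e ({a, b, c} \<union> R)), q, x @ [a, b] @ y @ [d, e, a, c] @ z @ [c, b, e, d] @ t)"
    using nano_homotopic_insert_pair[of "{a, b, c} \<union> R" p "x @ [a, b] @ y" "[a, c] @ z @ [c, b]" t
        d e S \<tau> "p c"] de dist abc
    by (simp add: q_def nanoword)
  also have "nano_homotopic S \<tau> \<dots>
      (insert d (insert e ({a, b, c} \<union> R)), q, x @ [b, a] @ y @ [d, a, e, c] @ z @ [c, e, b, d] @ t)"
    using nano_homotopic_move3_AB_CA_BC[OF inf invol, of "{c, d} \<union> R" x "y @ [d]" "c # z @ [c]"
        "d # t" a b e q S] de dist abc S
    by (simp add: q nanoword)
  also have "nano_homotopic S \<tau> \<dots> (insert d ({a, b} \<union> R), q, x @ [b, a] @ y @ [d, a] @ z @ [b, d] @ t)"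
    using nano_homotopic_cancel_pair[of e c "insert d ({a, b} \<union> R)" q "x @ [b, a] @ y @ [d, a]" z
        "b # d # t" \<tau> S] de dist abc
    by (simp add: q nanoword invol)
  also have "nano_homotopic S \<tau> \<dots> ({a, b, c} \<union> R, p, x @ [b, a] @ y @ [c, a] @ z @ [b, c] @ t)"
    using nano_homotopic_rename[of d "{a, b} \<union> R" q "x @ [b, a] @ y @ [d, a] @ z @ [b, d] @ t"
        c p S \<tau>] de dist abc d_words
    by (simp add: q nanoword)
  finally show ?thesis .
qed

theorem lemma3p1:
  fixes S :: "('a \<times> 'a \<times> 'a) set" and \<tau> :: "'a \<Rightarrow> 'a"
    and Al :: "'l set" and p :: "'l \<Rightarrow> 'a"
    and A B C :: 'l and x y z t :: "'l list"
  assumes infinite_letters: "infinite (UNIV :: 'l set)"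
    and invol: "\<And>u. \<tau> (\<tau> u) = u"
    and fin: "finite Al"
    and letters: "A \<in> Al" "B \<in> Al" "C \<in> Al"
    and distinct: "A \<noteq> B" "A \<noteq> C" "B \<noteq> C"
    and words: "set x \<subseteq> Al - {A, B, C}" "set y \<subseteq> Al - {A, B, C}"
               "set z \<subseteq> Al - {A, B, C}" "set t \<subseteq> Al - {A, B, C}"
    and gauss: "gauss_word (Al - {A, B, C}) (x @ y @ z @ t)"
  shows "((p A, \<tau> (p B), p C) \<in> S \<longrightarrow>
           nano_homotopic S \<tau> (Al, p, x @ [A, B] @ y @ [C, A] @ z @ [B, C] @ t)
                               (Al, p, x @ [B, A] @ y @ [A, C] @ z @ [C, B] @ t))
       \<and> ((\<tau> (p A), \<tau> (p B), p C) \<in> S \<longrightarrow>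
           nano_homotopic S \<tau> (Al, p, x @ [A, B] @ y @ [C, A] @ z @ [C, B] @ t)
                               (Al, p, x @ [B, A] @ y @ [A, C] @ z @ [B, C] @ t))
       \<and> ((p A, \<tau> (p B), \<tau> (p C)) \<in> S \<longrightarrow>
           nano_homotopic S \<tau> (Al, p, x @ [A, B] @ y @ [A, C] @ z @ [C, B] @ t)
                               (Al, p, x @ [B, A] @ y @ [C, A] @ z @ [B, C] @ t))"
proof -
  define R where "R = Al - {A, B, C}"
  have Al: "Al = {A, B, C} \<union> R"
    using letters by (auto simp: R_def)
  have R: "finite R" "gauss_word R (x @ y @ z @ t)" "A \<notin> R" "B \<notin> R" "C \<notin> R"
    and ABC: "distinct [A, B, C]"
    using fin gauss distinct by (auto simp: R_def)
  show ?thesis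
    unfolding Al
    using nano_homotopic_move3_AB_CA_BC[OF infinite_letters invol R ABC]
      nano_homotopic_move3_AB_CA_CB[OF infinite_letters invol R ABC]
      nano_homotopic_move3_AB_AC_CB[OF infinite_letters invol R ABC]
    by blast
qed

end
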